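(* Let $\mathcal H_S$, $\mathcal K$ be Hilbert spaces, $\mathcal B_S=\mathcal B(\mathcal H_S)$, $\mathcal F=\Gamma(L^2(\mathbb R,\mathcal K))$, let $\mathcal S_0\subseteq L^2(\mathbb R,\mathcal K)$ be a totalizing set, and let $r<s<t$. Let $(Q_{f,g})$ be a completely positive kernel on $\mathcal B_S$ based on $\chi_{[r,s]}\mathcal S_0$ and $(P_{f,g})$ a completely positive kernel on $\mathcal B_S$ based on $\chi_{[s,t]}\mathcal S_0$, and for $f,g\in\mathcal S_0$ put $Q_{f,g}:=Q_{\chi_{[r,s]}f,\chi_{[r,s]}g}$ and $P_{f,g}:=P_{\chi_{[s,t]}f,\chi_{[s,t]}g}$. Then the family $\{Q_{f,g}\circ P_{f,g}:f,g\in\mathcal S_0\}$ (composition of maps $\mathcal B_S\to\mathcal B_S$) is a completely positive kernel on $\mathcal B_S$.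
   Context: $\psi_f=\sum_{k\ge0}f^{\otimes k}/\sqrt{k!}$ is the exponential vector; $\mathcal S_0$ is totalizing if $\{\psi_f:f\in\mathcal S_0\}$ is total in $\mathcal F$; $\chi_I\mathcal S_0=\{\chi_If:f\in\mathcal S_0\}$. A completely positive kernel on a $C^*$-algebra $\mathcal B$ based on a set $\mathcal S$ is a family $\{P_{f,g}:f,g\in\mathcal S\}$ of linear maps $\mathcal B\to\mathcal B$ such that for every $n$, $f_1,\dots,f_n\in\mathcal S$, $b_1,\dots,b_n\in\mathcal B$, the map $x\mapsto\sum_{j,k}b_j^*P_{f_j,f_k}(x)b_k$ is completely positive. *)

theory Defs
  imports "HOL-Analysis.Analysis"
begin

class complex_inner = real_normed_vector +
  fixes scaleC :: "complex \<Rightarrow> 'a \<Rightarrow> 'a"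
    and cinner :: "'a \<Rightarrow> 'a \<Rightarrow> complex"
  assumes scaleC_add_right: "scaleC a (x + y) = scaleC a x + scaleC a y"
    and scaleC_add_left: "scaleC (a + b) x = scaleC a x + scaleC b x"
    and scaleC_scaleC: "scaleC a (scaleC b x) = scaleC (a * b) x"
    and scaleC_one: "scaleC 1 x = x"
    and scaleR_scaleC: "scaleR r x = scaleC (complex_of_real r) x"
    and cinner_conj: "cinner x y = cnj (cinner y x)"
    and cinner_add_right: "cinner x (y + z) = cinner x y + cinner x z"
    and cinner_scaleC_right: "cinner x (scaleC a y) = a * cinner x y"
    and cinner_self_norm: "cinner x x = complex_of_real ((norm x)\<^sup>2)"

class chilbert = complex_inner + complete_space

definition clin :: "('a::complex_inner \<Rightarrow> 'b::complex_inner) \<Rightarrow> bool" where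
  "clin A \<longleftrightarrow> (\<forall>x y. A (x + y) = A x + A y) \<and> (\<forall>c x. A (scaleC c x) = scaleC c (A x))"

definition bop :: "('a::chilbert \<Rightarrow> 'a) set" where
  "bop = {A. clin A \<and> (\<exists>K. \<forall>x. norm (A x) \<le> K * norm x)}"

text \<open>Hilbert space adjoint (exists uniquely for bounded operators).\<close>
definition cadj :: "('a::chilbert \<Rightarrow> 'a) \<Rightarrow> ('a \<Rightarrow> 'a)" where
  "cadj A = (THE B. \<forall>x y. cinner (A x) y = cinner x (B y))"

definition bop_linear :: "(('a::chilbert \<Rightarrow> 'a) \<Rightarrow> ('a \<Rightarrow> 'a)) \<Rightarrow> bool" where
  "bop_linear \<phi> \<longleftrightarrow> (\<forall>A\<in>bop. \<phi> A \<in> bop)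
     \<and> (\<forall>A\<in>bop. \<forall>B\<in>bop. \<phi> (\<lambda>v. A v + B v) = (\<lambda>v. \<phi> A v + \<phi> B v))
     \<and> (\<forall>A\<in>bop. \<forall>c. \<phi> (\<lambda>v. scaleC c (A v)) = (\<lambda>v. scaleC c (\<phi> A v)))"

text \<open>Positivity of an n\<times>n matrix [X i j] in M_n(B(H)) = B(H^n):
  the operator on H^n is positive, i.e. <xi, X xi> \<ge> 0 for all xi in H^n.\<close>
definition opmat_pos :: "nat \<Rightarrow> (nat \<Rightarrow> nat \<Rightarrow> ('a::chilbert \<Rightarrow> 'a)) \<Rightarrow> bool" where
  "opmat_pos n X \<longleftrightarrow> (\<forall>i<n. \<forall>j<n. X i j \<in> bop)
     \<and> (\<forall>\<xi> :: nat \<Rightarrow> 'a. \<exists>r\<ge>0.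
          (\<Sum>i<n. \<Sum>j<n. cinner (\<xi> i) (X i j (\<xi> j))) = complex_of_real r)"

definition cp_map :: "(('a::chilbert \<Rightarrow> 'a) \<Rightarrow> ('a \<Rightarrow> 'a)) \<Rightarrow> bool" where
  "cp_map \<phi> \<longleftrightarrow> bop_linear \<phi>
     \<and> (\<forall>n X. opmat_pos n X \<longrightarrow> opmat_pos n (\<lambda>i j. \<phi> (X i j)))"

definition cp_kernel :: "'s set \<Rightarrow> ('s \<Rightarrow> 's \<Rightarrow> ('a::chilbert \<Rightarrow> 'a) \<Rightarrow> ('a \<Rightarrow> 'a)) \<Rightarrow> bool" where
  "cp_kernel S P \<longleftrightarrow> (\<forall>f\<in>S. \<forall>g\<in>S. bop_linear (P f g))
     \<and> (\<forall>n (fs :: nat \<Rightarrow> 's) (bs :: nat \<Rightarrow> 'a \<Rightarrow> 'a).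
          (\<forall>j<n. fs j \<in> S \<and> bs j \<in> bop) \<longrightarrow>
          cp_map (\<lambda>x. (\<lambda>v. \<Sum>j<n. \<Sum>k<n. cadj (bs j) (P (fs j) (fs k) x (bs k v)))))"

definition L2 :: "(real \<Rightarrow> 'k::chilbert) set" where
  "L2 = {f. f \<in> borel_measurable lborel \<and> integrable lborel (\<lambda>t. (norm (f t))\<^sup>2)}"

definition L2_inner :: "(real \<Rightarrow> 'k::chilbert) \<Rightarrow> (real \<Rightarrow> 'k) \<Rightarrow> complex" where
  "L2_inner f g = (LINT t|lborel. cinner (f t) (g t))"

text \<open>Inner product of exponential vectors: <psi_f, psi_g> = exp <f,g>.\<close>
definition expvec_inner :: "(real \<Rightarrow> 'k::chilbert) \<Rightarrow> (real \<Rightarrow> 'k) \<Rightarrow> complex" where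
  "expvec_inner f g = exp (L2_inner f g)"

text \<open>S0 is totalizing: the closed span of {psi_f | f in S0} contains every exponential
  vector psi_g (g in L^2), hence (exponential vectors being total) equals the Fock space.
  The squared distance ||psi_g - sum c_f psi_f||^2 is written out via <psi_f,psi_g>.\<close>
definition totalizing :: "(real \<Rightarrow> 'k::chilbert) set \<Rightarrow> bool" where
  "totalizing S0 \<longleftrightarrow> S0 \<subseteq> L2 \<and>
     (\<forall>g\<in>L2. \<forall>\<epsilon>>0. \<exists>F c. finite F \<and> F \<subseteq> S0 \<and>
        Re (expvec_inner g g
            - (\<Sum>f\<in>F. c f * expvec_inner g f)
            - (\<Sum>f\<in>F. cnj (c f) * expvec_inner f g)
            + (\<Sum>f\<in>F. \<Sum>f'\<in>F. cnj (c f) * c f' * expvec_inner f f')) < \<epsilon>)"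

definition chi :: "real set \<Rightarrow> (real \<Rightarrow> 'k::real_vector) \<Rightarrow> (real \<Rightarrow> 'k)" where
  "chi I f = (\<lambda>x. indicator I x *\<^sub>R f x)"

end

theory Submission
  imports Defs "HOL-Library.Complex_Order"
begin

text \<open>A kernel K is completely positive iff for all positive block operator matrices [Y_ac] and all
  indices f_a the block matrix [K_{f_a,f_c}(Y_ac)] is positive again; for the composition one
  applies this first to P and then to Q. To derive block positivity from the definition, the CP map
  x \<mapsto> \<Sum> b_a* K(x) b_c is tested with rank-one operators b_a. If H contains N orthonormal
  vectors, the test reproduces the block form directly. Otherwise H has a finite orthonormal
  basis, and a Gram factorisation of the scalar coefficient matrix writes Y as a finite sum of
  rank-one block matrices [|w_a><w_c|], each of which is handled by testing against the matrix
  units |e_r><e_s|. Adjoints of the b_a exist by the Riesz representation theorem.\<close>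

section \<open>Complex inner product spaces\<close>

lemma cinner_add_left: "cinner (x + y) z = cinner x z + cinner y (z::'a::complex_inner)"
  by (metis cinner_conj cinner_add_right complex_cnj_add)

lemma cinner_scaleC_left: "cinner (scaleC a x) y = cnj a * cinner x (y::'a::complex_inner)"
  by (metis cinner_conj cinner_scaleC_right complex_cnj_mult)

lemma cinner_zero_right [simp]: "cinner x (0::'a::complex_inner) = 0"
  using cinner_add_right[of x 0 0] by simp

lemma cinner_zero_left [simp]: "cinner (0::'a::complex_inner) x = 0"
  using cinner_add_left[of 0 0 x] by simp

lemma scaleC_zero_right [simp]: "scaleC a (0::'a::complex_inner) = 0"
  using scaleC_add_right[of a "0::'a" 0] by simp

lemma scaleC_zero_left [simp]: "scaleC 0 (x::'a::complex_inner) = 0"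
  using scaleC_add_left[of 0 0 x] by simp

lemma scaleC_minus1_left: "scaleC (-1) (x::'a::complex_inner) = - x"
  using scaleR_scaleC[of "-1" x] by simp

lemma cinner_diff_right: "cinner x (y - z) = cinner x y - cinner x (z::'a::complex_inner)"
  using cinner_add_right[of x y "-z"] cinner_scaleC_right[of x "-1" z]
  by (simp add: scaleC_minus1_left)

lemma cinner_sum_right: "cinner x (\<Sum>i\<in>A. f i) = (\<Sum>i\<in>A. cinner (x::'a::complex_inner) (f i))"
  by (induct A rule: infinite_finite_induct) (auto simp: cinner_add_right)

lemma cinner_sum_left: "cinner (\<Sum>i\<in>A. f i) x = (\<Sum>i\<in>A. cinner (f i) (x::'a::complex_inner))"
  by (induct A rule: infinite_finite_induct) (auto simp: cinner_add_left)

lemma scaleC_sum_right: "scaleC a (\<Sum>i\<in>A. f i) = (\<Sum>i\<in>A. scaleC a (f i::'a::complex_inner))"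
  by (induct A rule: infinite_finite_induct) (auto simp: scaleC_add_right)

lemma scaleC_sum_left: "scaleC (\<Sum>i\<in>A. f i) x = (\<Sum>i\<in>A. scaleC (f i) (x::'a::complex_inner))"
  by (induct A rule: infinite_finite_induct) (auto simp: scaleC_add_left)

lemma cinner_self_eq_0 [simp]: "cinner x x = 0 \<longleftrightarrow> (x::'a::complex_inner) = 0"
  by (simp add: cinner_self_norm)

lemma power2_norm_eq_cinner: "(norm x)\<^sup>2 = Re (cinner x (x::'a::complex_inner))"
  by (simp add: cinner_self_norm)

lemma cinner_ext: "(\<And>y. cinner y x = cinner y z) \<Longrightarrow> x = (z::'a::complex_inner)"
  using cinner_self_eq_0[of "x - z"] by (simp add: cinner_diff_right)

lemma cnj_mult_self: "cnj a * a = complex_of_real ((cmod a)\<^sup>2)"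
  by (subst complex_norm_square) (rule mult.commute)

lemma norm_scaleC: "norm (scaleC a x) = cmod a * norm (x::'a::complex_inner)"
proof -
  have "(norm (scaleC a x))\<^sup>2 = Re ((cnj a * a) * cinner x x)"
    by (simp only: power2_norm_eq_cinner cinner_scaleC_left cinner_scaleC_right mult.assoc)
      (simp add: mult.left_commute)
  also have "\<dots> = (cmod a * norm x)\<^sup>2"
    by (simp only: cnj_mult_self cinner_self_norm Re_complex_of_real flip: of_real_mult)
      (simp add: power_mult_distrib)
  finally show ?thesis by (simp add: power2_eq_iff_nonneg)
qed

lemma power2_norm_add:
  "(norm (x + y))\<^sup>2 = (norm x)\<^sup>2 + (norm y)\<^sup>2 + 2 * Re (cinner x (y::'a::complex_inner))"
proof -
  have "Re (cinner y x) = Re (cinner x y)" by (subst cinner_conj) simp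
  then show ?thesis
    by (simp add: power2_norm_eq_cinner cinner_add_left cinner_add_right)
qed

lemma power2_norm_diff:
  "(norm (x - y))\<^sup>2 = (norm x)\<^sup>2 + (norm y)\<^sup>2 - 2 * Re (cinner x (y::'a::complex_inner))"
  using power2_norm_add[of x "-y"] cinner_scaleC_right[of x "-1" y]
  by (simp add: scaleC_minus1_left)

lemma parallelogram_law:
  "(norm (x + y))\<^sup>2 + (norm (x - y))\<^sup>2 = 2 * (norm x)\<^sup>2 + 2 * (norm (y::'a::complex_inner))\<^sup>2"
  by (simp add: power2_norm_add power2_norm_diff)

lemma power2_norm_diff_projection:
  fixes x y :: "'a::complex_inner"
  assumes "y \<noteq> 0"
  shows "(norm (x - scaleC (cinner y x / complex_of_real ((norm y)\<^sup>2)) y))\<^sup>2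
    = (norm x)\<^sup>2 - (cmod (cinner y x))\<^sup>2 / (norm y)\<^sup>2"
proof -
  define c where "c = cinner y x / complex_of_real ((norm y)\<^sup>2)"
  have ny: "norm y \<noteq> 0" using assms by simp
  have "cinner x (scaleC c y) = (cinner y x * cnj (cinner y x)) / complex_of_real ((norm y)\<^sup>2)"
    by (simp add: c_def cinner_scaleC_right cinner_conj[of x y])
  also have "\<dots> = complex_of_real ((cmod (cinner y x))\<^sup>2 / (norm y)\<^sup>2)"
    by (simp only: complex_norm_square[symmetric] of_real_divide)
  finally have "cinner x (scaleC c y) = complex_of_real ((cmod (cinner y x))\<^sup>2 / (norm y)\<^sup>2)" .
  moreover have "cmod c = cmod (cinner y x) / (norm y)\<^sup>2"
    by (simp add: c_def norm_divide flip: of_real_power)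
  moreover have "(norm (x - scaleC c y))\<^sup>2
      = (norm x)\<^sup>2 + (cmod c * norm y)\<^sup>2 - 2 * Re (cinner x (scaleC c y))"
    by (simp add: power2_norm_diff norm_scaleC)
  ultimately show ?thesis
    unfolding c_def[symmetric] using ny by (simp add: power_divide power_mult_distrib power2_eq_square)
qed

lemma norm_cinner_le: "cmod (cinner x y) \<le> norm x * norm (y::'a::complex_inner)"
proof (cases "y = 0")
  case False
  have "(cmod (cinner y x))\<^sup>2 / (norm y)\<^sup>2 \<le> (norm x)\<^sup>2"
    using power2_norm_diff_projection[OF False, of x] by (metis diff_ge_0_iff_ge zero_le_power2)
  then have "(cmod (cinner x y))\<^sup>2 \<le> (norm x * norm y)\<^sup>2"
    using False by (subst cinner_conj) (simp add: field_simps power_mult_distrib)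
  then show ?thesis by (simp add: power2_le_iff_abs_le)
qed simp

lemma cinner_eq_0_if_norm_minimal:
  fixes y z :: "'a::complex_inner"
  assumes "\<And>c. norm z \<le> norm (z - scaleC c y)"
  shows "cinner y z = 0"
proof (cases "y = 0")
  case False
  have "(norm z)\<^sup>2 \<le> (norm z)\<^sup>2 - (cmod (cinner y z))\<^sup>2 / (norm y)\<^sup>2"
    using assms power2_norm_diff_projection[OF False, of z] by (metis norm_ge_zero power_mono)
  then have "(cmod (cinner y z))\<^sup>2 \<le> 0"
    using False by (simp add: field_simps)
  then show ?thesis by simp
qed simp

lemma Cauchy_if_power2_dist_le:
  fixes X :: "nat \<Rightarrow> 'a::real_normed_vector"
  assumes dist: "\<And>i j. (norm (X i - X j))\<^sup>2 \<le> \<epsilon> i + \<epsilon> j" and "\<epsilon> \<longlonglongrightarrow> 0"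
  shows "Cauchy X"
proof (rule metric_CauchyI)
  fix e :: real assume "e > 0"
  then have "0 < e\<^sup>2 / 2" by simp
  with \<open>\<epsilon> \<longlonglongrightarrow> 0\<close> have "\<forall>\<^sub>F n in sequentially. \<epsilon> n < e\<^sup>2 / 2"
    by (rule order_tendstoD(2))
  then obtain N where N: "\<And>n. N \<le> n \<Longrightarrow> \<epsilon> n < e\<^sup>2 / 2"
    unfolding eventually_sequentially by blast
  have "norm (X i - X j) < e" if "N \<le> i" "N \<le> j" for i j
  proof -
    from dist[of i j] N[OF that(1)] N[OF that(2)] have "(norm (X i - X j))\<^sup>2 < e\<^sup>2" by linarith
    with \<open>e > 0\<close> show ?thesis by (simp add: power_less_imp_less_base)
  qed
  then show "\<exists>N. \<forall>i\<ge>N. \<forall>j\<ge>N. dist (X i) (X j) < e" by (auto simp: dist_norm)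
qed

lemma nearest_point_exists:
  fixes x :: "'a::chilbert" and C :: "'a set"
  assumes "closed C" "C \<noteq> {}"
    and midpoint: "\<And>y z. y \<in> C \<Longrightarrow> z \<in> C \<Longrightarrow> scaleR (1/2) (y + z) \<in> C"
  shows "\<exists>m\<in>C. \<forall>y\<in>C. norm (x - m) \<le> norm (x - y)"
proof -
  define D where "D = (\<lambda>y. (norm (x - y))\<^sup>2) ` C"
  define \<delta> where "\<delta> = Inf D"
  have bdd: "bdd_below D" unfolding D_def by (intro bdd_belowI[of _ 0]) auto
  have \<delta>_le: "\<delta> \<le> (norm (x - y))\<^sup>2" if "y \<in> C" for y
    unfolding \<delta>_def D_def using bdd that by (intro cInf_lower) (auto simp: D_def)
  define \<eta> where "\<eta> n = inverse (real (Suc n))" for n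
  have "\<exists>y\<in>C. (norm (x - y))\<^sup>2 < \<delta> + \<eta> n" for n
    using cInf_lessD[of D "\<delta> + \<eta> n"] \<open>C \<noteq> {}\<close> unfolding \<delta>_def D_def \<eta>_def by auto
  then obtain ms where ms_in: "\<And>n. ms n \<in> C"
    and ms_close: "\<And>n. (norm (x - ms n))\<^sup>2 < \<delta> + \<eta> n" by metis
  have \<eta>_lim: "\<eta> \<longlonglongrightarrow> 0"
    unfolding \<eta>_def by (rule LIMSEQ_inverse_real_of_nat)
  have "(norm (ms i - ms j))\<^sup>2 \<le> 2 * \<eta> i + 2 * \<eta> j" for i j
  proof -
    have "4 * \<delta> \<le> 4 * (norm (x - scaleR (1/2) (ms i + ms j)))\<^sup>2"
      using \<delta>_le[OF midpoint[OF ms_in ms_in]] by simp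
    also have "\<dots> = (norm ((x - ms i) + (x - ms j)))\<^sup>2"
    proof -
      have "(x - ms i) + (x - ms j) = scaleR 2 (x - scaleR (1/2) (ms i + ms j))"
        by (simp add: algebra_simps scaleR_2)
      then show ?thesis by (simp add: power_mult_distrib)
    qed
    finally have "4 * \<delta> \<le> (norm ((x - ms i) + (x - ms j)))\<^sup>2" .
    moreover have "(norm (ms i - ms j))\<^sup>2
        = 2 * (norm (x - ms i))\<^sup>2 + 2 * (norm (x - ms j))\<^sup>2 - (norm ((x - ms i) + (x - ms j)))\<^sup>2"
      using parallelogram_law[of "x - ms i" "x - ms j"] by (simp add: norm_minus_commute)
    ultimately show ?thesis using ms_close[of i] ms_close[of j] by linarith
  qed
  then have "Cauchy ms"
    using tendsto_mult_right_zero[OF \<eta>_lim, of 2]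
    by (intro Cauchy_if_power2_dist_le[where \<epsilon> = "\<lambda>n. 2 * \<eta> n"]) auto
  then obtain m where lim: "ms \<longlonglongrightarrow> m" using convergent_eq_Cauchy by blast
  have "m \<in> C" using closed_sequentially[OF \<open>closed C\<close>] ms_in lim by blast
  have "(norm (x - m))\<^sup>2 \<le> \<delta>"
  proof (rule LIMSEQ_le)
    show "(\<lambda>n. (norm (x - ms n))\<^sup>2) \<longlonglongrightarrow> (norm (x - m))\<^sup>2"
      by (intro tendsto_intros lim)
    show "(\<lambda>n. \<delta> + \<eta> n) \<longlonglongrightarrow> \<delta>"
      using tendsto_add[OF tendsto_const \<eta>_lim] by simp
    show "\<exists>N. \<forall>n\<ge>N. (norm (x - ms n))\<^sup>2 \<le> \<delta> + \<eta> n"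
      using ms_close less_imp_le by blast
  qed
  then have "norm (x - m) \<le> norm (x - y)" if "y \<in> C" for y
    using \<delta>_le[OF that] by (simp add: power2_le_imp_le)
  with \<open>m \<in> C\<close> show ?thesis by blast
qed

lemma riesz_representation:
  fixes l :: "'a::chilbert \<Rightarrow> complex"
  assumes add: "\<And>x y. l (x + y) = l x + l y"
    and scale: "\<And>c x. l (scaleC c x) = c * l x"
    and bounded: "\<And>x. cmod (l x) \<le> C * norm x"
  shows "\<exists>w. \<forall>x. l x = cinner w x"
proof (cases "\<forall>x. l x = 0")
  case True
  then show ?thesis by (intro exI[of _ 0]) simp
next
  case False
  then obtain x0 where "l x0 \<noteq> 0" by blast
  have l0: "l 0 = 0" using scale[of 0 0] by simp
  have diff: "l (x - y) = l x - l y" for x y using add[of "x - y" y] by simp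
  have "bounded_linear l"
    by (rule bounded_linear_intro[where K = C])
      (auto simp: add scale scaleR_scaleC scaleR_conv_of_real mult.commute bounded)
  then have "closed (l -` {0})"
    by (intro continuous_closed_vimage) (auto intro: linear_continuous_at)
  moreover have "scaleR (1/2) (y + z) \<in> l -` {0}" if "y \<in> l -` {0}" "z \<in> l -` {0}" for y z
    using that by (simp add: scaleR_scaleC scale add)
  moreover have "l -` {0} \<noteq> {}" using l0 by blast
  ultimately obtain m where "m \<in> l -` {0}" and "\<forall>y \<in> l -` {0}. norm (x0 - m) \<le> norm (x0 - y)"
    using nearest_point_exists[of "l -` {0}" x0] by blast
  then have "l m = 0" and m_nearest: "\<And>y. l y = 0 \<Longrightarrow> norm (x0 - m) \<le> norm (x0 - y)" by auto
  define z where "z = x0 - m"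
  have z_orth: "cinner y z = 0" if "l y = 0" for y
  proof (rule cinner_eq_0_if_norm_minimal)
    fix c
    have "l (m + scaleC c y) = 0" using \<open>l m = 0\<close> that by (simp add: add scale)
    then show "norm z \<le> norm (z - scaleC c y)"
      using m_nearest by (fastforce simp: z_def algebra_simps)
  qed
  have "l z = l x0" using \<open>l m = 0\<close> by (simp add: z_def diff)
  with \<open>l x0 \<noteq> 0\<close> have "l z \<noteq> 0" "z \<noteq> 0" using l0 by auto
  have "l x = cinner (scaleC (cnj (l z / cinner z z)) z) x" for x
  proof -
    have "l (x - scaleC (l x / l z) z) = 0" using \<open>l z \<noteq> 0\<close> by (simp add: diff scale)
    then have "cinner z (x - scaleC (l x / l z) z) = 0"
      using z_orth by (metis cinner_conj complex_cnj_zero)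
    then have "cinner z x = l x / l z * cinner z z"
      by (simp add: cinner_diff_right cinner_scaleC_right)
    then show ?thesis using \<open>l z \<noteq> 0\<close> \<open>z \<noteq> 0\<close> by (simp add: cinner_scaleC_left)
  qed
  then show ?thesis by blast
qed

section \<open>Bounded operators\<close>

lemma clinD:
  assumes "clin A"
  shows "A (x + y) = A x + A y" "A (scaleC c x) = scaleC c (A x)"
  using assms unfolding clin_def by auto

lemma clin_zero: "clin A \<Longrightarrow> A 0 = (0::'b::complex_inner)"
  using clinD(2)[of A 0 "0::'a::complex_inner"] by simp

lemma clin_sum: "clin A \<Longrightarrow> A (\<Sum>i\<in>I. f i) = (\<Sum>i\<in>I. A (f i::'a::complex_inner)::'b::complex_inner)"
  by (induct I rule: infinite_finite_induct) (auto simp: clin_zero clinD)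

lemma bop_clin: "A \<in> bop \<Longrightarrow> clin A"
  unfolding bop_def by simp

lemma bopI: "clin A \<Longrightarrow> (\<And>x. norm (A x) \<le> K * norm x) \<Longrightarrow> A \<in> bop"
  unfolding bop_def by auto

lemma bopE:
  assumes "A \<in> bop"
  obtains K where "K \<ge> 0" "\<And>x. norm (A x) \<le> K * norm x"
proof -
  from assms obtain K where K: "\<And>x. norm (A x) \<le> K * norm x" unfolding bop_def by auto
  have "norm (A x) \<le> max K 0 * norm x" for x
    using K[of x] by (meson max.cobounded1 mult_right_mono norm_ge_zero order_trans)
  then show ?thesis using that[of "max K 0"] by simp
qed

lemma bop_zero: "(\<lambda>v. 0) \<in> bop"
  by (rule bopI[where K=0]) (auto simp: clin_def)

lemma bop_add:
  assumes "A \<in> bop" "B \<in> bop"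
  shows "(\<lambda>v. A v + B v) \<in> bop"
proof -
  obtain K1 K2 where "\<And>x. norm (A x) \<le> K1 * norm x" "\<And>x. norm (B x) \<le> K2 * norm x"
    using bopE[OF assms(1)] bopE[OF assms(2)] by metis
  then have "norm (A x + B x) \<le> (K1 + K2) * norm x" for x
    using norm_triangle_ineq[of "A x" "B x"] by (smt (verit) distrib_right)
  moreover have "clin (\<lambda>v. A v + B v)"
    using bop_clin[OF assms(1)] bop_clin[OF assms(2)]
    unfolding clin_def by (simp add: scaleC_add_right algebra_simps)
  ultimately show ?thesis by (rule bopI[rotated])
qed

lemma bop_sum: "finite I \<Longrightarrow> (\<And>i. i \<in> I \<Longrightarrow> A i \<in> bop) \<Longrightarrow> (\<lambda>v. \<Sum>i\<in>I. A i v) \<in> bop"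
  by (induct I rule: finite_induct) (auto simp: bop_zero bop_add)

lemma bop_scaleC:
  assumes "A \<in> bop"
  shows "(\<lambda>v. scaleC c (A v)) \<in> bop"
proof -
  obtain K where K: "K \<ge> 0" "\<And>x. norm (A x) \<le> K * norm x" using bopE[OF assms] by blast
  show ?thesis
  proof (rule bopI[where K = "cmod c * K"])
    show "clin (\<lambda>v. scaleC c (A v))"
      using bop_clin[OF assms] unfolding clin_def by (simp add: scaleC_add_right scaleC_scaleC mult.commute)
    show "norm (scaleC c (A x)) \<le> cmod c * K * norm x" for x
      using K(2)[of x] by (simp add: norm_scaleC mult.assoc mult_left_mono)
  qed
qed

lemma bop_comp:
  assumes "A \<in> bop" "B \<in> bop"
  shows "(\<lambda>v. A (B v)) \<in> bop"
proof -
  obtain K1 where K1: "K1 \<ge> 0" "\<And>x. norm (A x) \<le> K1 * norm x" using bopE[OF assms(1)] by blast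
  obtain K2 where K2: "\<And>x. norm (B x) \<le> K2 * norm x" using bopE[OF assms(2)] by blast
  show ?thesis
  proof (rule bopI[where K = "K1 * K2"])
    show "clin (\<lambda>v. A (B v))"
      using bop_clin[OF assms(1)] bop_clin[OF assms(2)] unfolding clin_def by simp
    show "norm (A (B x)) \<le> K1 * K2 * norm x" for x
      using K1(2)[of "B x"] mult_left_mono[OF K2[of x] K1(1)] by (simp add: mult.assoc)
  qed
qed

definition rank_one :: "'a::complex_inner \<Rightarrow> 'a \<Rightarrow> 'a \<Rightarrow> 'a" where
  "rank_one u w = (\<lambda>v. scaleC (cinner w v) u)"

lemma rank_one_bop: "rank_one u w \<in> bop"
proof (rule bopI[where K = "norm w * norm u"])
  show "clin (rank_one u w)" unfolding clin_def rank_one_def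
    by (simp add: cinner_add_right cinner_scaleC_right scaleC_add_left scaleC_scaleC)
  show "norm (rank_one u w x) \<le> norm w * norm u * norm x" for x
    unfolding rank_one_def using mult_right_mono[OF norm_cinner_le[of w x] norm_ge_zero[of u]]
    by (simp add: norm_scaleC mult_ac)
qed

lemma adjoint_exists:
  fixes A :: "'a::chilbert \<Rightarrow> 'a"
  assumes "A \<in> bop"
  shows "\<exists>B. \<forall>x y. cinner (A x) y = cinner x (B y)"
proof -
  obtain K where K: "\<And>x. norm (A x) \<le> K * norm x" using bopE[OF assms] by blast
  have "\<exists>w. \<forall>x. cinner y (A x) = cinner w x" for y
  proof (rule riesz_representation[where C = "norm y * K"])
    show "cinner y (A (x + z)) = cinner y (A x) + cinner y (A z)" for x z
      by (simp add: clinD[OF bop_clin[OF assms]] cinner_add_right)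
    show "cinner y (A (scaleC c x)) = c * cinner y (A x)" for c x
      by (simp add: clinD[OF bop_clin[OF assms]] cinner_scaleC_right)
    show "cmod (cinner y (A x)) \<le> norm y * K * norm x" for x
      using norm_cinner_le[of y "A x"] mult_left_mono[OF K[of x] norm_ge_zero[of y]]
      by (simp add: mult.assoc)
  qed
  then obtain B where "\<And>y x. cinner y (A x) = cinner (B y) x" by metis
  then have "cinner (A x) y = cinner x (B y)" for x y
    by (metis cinner_conj)
  then show ?thesis by blast
qed

lemma cadj_cinner:
  fixes A :: "'a::chilbert \<Rightarrow> 'a"
  assumes "A \<in> bop"
  shows "cinner (A x) y = cinner x (cadj A y)"
proof -
  obtain B where B: "\<forall>x y. cinner (A x) y = cinner x (B y)" using adjoint_exists[OF assms] by blast
  have "cadj A = B" unfolding cadj_def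
  proof (rule the_equality)
    fix B' assume "\<forall>x y. cinner (A x) y = cinner x (B' y)"
    with B show "B' = B" by (intro ext cinner_ext) metis
  qed (rule B)
  with B show ?thesis by simp
qed

lemma cadj_bop:
  fixes A :: "'a::chilbert \<Rightarrow> 'a"
  assumes "A \<in> bop"
  shows "cadj A \<in> bop"
proof -
  obtain K where K: "K \<ge> 0" "\<And>x. norm (A x) \<le> K * norm x" using bopE[OF assms] by blast
  have "clin (cadj A)" unfolding clin_def
  proof (intro conjI allI)
    show "cadj A (x + y) = cadj A x + cadj A y" for x y
      by (rule cinner_ext) (simp add: cadj_cinner[OF assms, symmetric] cinner_add_right)
    show "cadj A (scaleC c x) = scaleC c (cadj A x)" for c x
      by (rule cinner_ext) (simp add: cadj_cinner[OF assms, symmetric] cinner_scaleC_right)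
  qed
  then show ?thesis
  proof (rule bopI[where K = K])
    fix y
    have "(norm (cadj A y))\<^sup>2 = Re (cinner (A (cadj A y)) y)"
      by (simp add: power2_norm_eq_cinner cadj_cinner[OF assms])
    also have "\<dots> \<le> norm (A (cadj A y)) * norm y"
      using complex_Re_le_cmod norm_cinner_le order_trans by blast
    also have "\<dots> \<le> K * norm (cadj A y) * norm y"
      using K(2) by (simp add: mult_right_mono)
    finally have "norm (cadj A y) * norm (cadj A y) \<le> (K * norm y) * norm (cadj A y)"
      by (simp add: power2_eq_square mult_ac)
    then show "norm (cadj A y) \<le> K * norm y"
      by (cases "norm (cadj A y) = 0") (use K(1) in auto)
  qed
qed

lemma bop_linear_in_bop: "bop_linear \<phi> \<Longrightarrow> A \<in> bop \<Longrightarrow> \<phi> A \<in> bop"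
  unfolding bop_linear_def by blast

lemma bop_linear_add:
  "bop_linear \<phi> \<Longrightarrow> A \<in> bop \<Longrightarrow> B \<in> bop \<Longrightarrow> \<phi> (\<lambda>v. A v + B v) = (\<lambda>v. \<phi> A v + \<phi> B v)"
  unfolding bop_linear_def by blast

lemma bop_linear_scaleC:
  "bop_linear \<phi> \<Longrightarrow> A \<in> bop \<Longrightarrow> \<phi> (\<lambda>v. scaleC c (A v)) = (\<lambda>v. scaleC c (\<phi> A v))"
  unfolding bop_linear_def by blast

lemma bop_linear_zero: "bop_linear \<phi> \<Longrightarrow> \<phi> (\<lambda>v. 0) = (\<lambda>v. 0)"
  using bop_linear_scaleC[OF _ bop_zero, of \<phi> 0] by simp

lemma bop_linear_sum:
  assumes "bop_linear \<phi>" "finite I" "\<And>i. i \<in> I \<Longrightarrow> A i \<in> bop"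
  shows "\<phi> (\<lambda>v. \<Sum>i\<in>I. A i v) = (\<lambda>v. \<Sum>i\<in>I. \<phi> (A i) v)"
  using assms(2,3)
proof (induct I rule: finite_induct)
  case (insert i I)
  then have "\<phi> (\<lambda>v. A i v + (\<Sum>i\<in>I. A i v)) = (\<lambda>v. \<phi> (A i) v + \<phi> (\<lambda>v. \<Sum>i\<in>I. A i v) v)"
    by (intro bop_linear_add[OF assms(1)] bop_sum) auto
  with insert show ?case by simp
qed (simp add: bop_linear_zero[OF assms(1)])

lemma bop_linear_comp:
  assumes "bop_linear \<phi>" "bop_linear \<psi>"
  shows "bop_linear (\<phi> \<circ> \<psi>)"
  using assms unfolding bop_linear_def by simp

lemma bop_linear_sandwich:
  assumes "bop_linear \<phi>" "A \<in> bop" "B \<in> bop"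
  shows "bop_linear (\<lambda>x v. A (\<phi> x (B v)))"
  unfolding bop_linear_def
  using bop_linear_in_bop[OF assms(1)] bop_linear_add[OF assms(1)] bop_linear_scaleC[OF assms(1)]
    clinD[OF bop_clin[OF assms(2)]] bop_comp[OF assms(2) bop_comp[OF _ assms(3)]]
  by simp

lemma bop_linear_sum_maps:
  assumes "finite I" "\<And>i. i \<in> I \<Longrightarrow> bop_linear (\<phi> i)"
  shows "bop_linear (\<lambda>x v. \<Sum>i\<in>I. \<phi> i x v)"
  unfolding bop_linear_def using assms
  by (auto intro!: bop_sum simp: bop_linear_in_bop bop_linear_add bop_linear_scaleC
      sum.distrib scaleC_sum_right)

definition orthonormal :: "nat \<Rightarrow> (nat \<Rightarrow> 'a::complex_inner) \<Rightarrow> bool" where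
  "orthonormal n e \<longleftrightarrow> (\<forall>i<n. \<forall>j<n. cinner (e i) (e j) = (if i = j then 1 else 0))"

definition orthonormal_basis :: "nat \<Rightarrow> (nat \<Rightarrow> 'a::complex_inner) \<Rightarrow> bool" where
  "orthonormal_basis n e \<longleftrightarrow> orthonormal n e \<and> (\<forall>v. v = (\<Sum>r<n. scaleC (cinner (e r) v) (e r)))"

lemma orthonormal_cinner_sum_right:
  assumes "orthonormal n e" "i < n"
  shows "cinner (e i) (\<Sum>r<n. scaleC (f r) (e r)) = f i"
proof -
  have "cinner (e i) (\<Sum>r<n. scaleC (f r) (e r)) = (\<Sum>r<n. f r * cinner (e i) (e r))"
    by (simp add: cinner_sum_right cinner_scaleC_right)
  also have "\<dots> = (\<Sum>r<n. if r = i then f r else 0)"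
    using assms unfolding orthonormal_def by (intro sum.cong) auto
  finally show ?thesis using assms(2) by simp
qed

lemma orthonormal_cinner_sum_left:
  assumes "orthonormal n e" "i < n"
  shows "cinner (\<Sum>r<n. scaleC (f r) (e r)) (e i) = cnj (f i)"
  by (subst cinner_conj) (simp add: orthonormal_cinner_sum_right[OF assms])

lemma orthonormal_extend:
  fixes e :: "nat \<Rightarrow> 'a::complex_inner"
  assumes e: "orthonormal n e" and v: "v \<noteq> (\<Sum>r<n. scaleC (cinner (e r) v) (e r))"
  shows "\<exists>e'::nat \<Rightarrow> 'a. orthonormal (Suc n) e'"
proof -
  define u where "u = v - (\<Sum>r<n. scaleC (cinner (e r) v) (e r))"
  have "u \<noteq> 0" using v by (simp add: u_def)
  have u_orth: "cinner (e i) u = 0" "cinner u (e i) = 0" if "i < n" for i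
    using orthonormal_cinner_sum_right[OF e that] cinner_conj[of u "e i"]
    by (simp_all add: u_def cinner_diff_right)
  define k where "k = complex_of_real (1 / norm u)"
  have "norm (scaleC k u) = 1"
    using \<open>u \<noteq> 0\<close> by (simp add: k_def norm_scaleC norm_divide)
  then have "cinner (scaleC k u) (scaleC k u) = 1"
    by (simp add: cinner_self_norm)
  then have "orthonormal (Suc n) (e(n := scaleC k u))"
    using e u_orth unfolding orthonormal_def
    by (auto simp: less_Suc_eq cinner_scaleC_left cinner_scaleC_right)
  then show ?thesis by blast
qed

lemma orthonormal_or_basis:
  "(\<exists>e::nat \<Rightarrow> 'a::complex_inner. orthonormal n e) \<or> (\<exists>d (e::nat \<Rightarrow> 'a). orthonormal_basis d e)"
proof (induct n)
  case 0
  then show ?case by (auto simp: orthonormal_def)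
next
  case (Suc n)
  then show ?case
    using orthonormal_extend unfolding orthonormal_basis_def by blast
qed

lemma clin_eq_on_orthonormal_basis:
  fixes A B :: "'a::complex_inner \<Rightarrow> 'a"
  assumes "orthonormal_basis d e" "clin A" "clin B"
    and coeff: "\<And>r s. r < d \<Longrightarrow> s < d \<Longrightarrow> cinner (e r) (A (e s)) = cinner (e r) (B (e s))"
  shows "A = B"
proof
  fix v
  have expand: "x = (\<Sum>r<d. scaleC (cinner (e r) x) (e r))" for x
    using assms(1) unfolding orthonormal_basis_def by blast
  have "cinner (e r) (A v) = cinner (e r) (B v)" if "r < d" for r
  proof -
    have "C v = (\<Sum>s<d. scaleC (cinner (e s) v) (C (e s)))" if "clin C" for C :: "'a \<Rightarrow> 'a"
      by (subst expand) (simp add: clin_sum[OF that] clinD[OF that])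
    from this[OF assms(2)] this[OF assms(3)] show ?thesis
      using coeff[OF that] by (simp add: cinner_sum_right cinner_scaleC_right)
  qed
  then show "A v = B v" by (subst (1 2) expand) simp
qed

section \<open>Positive semidefinite matrices\<close>

definition quad_form :: "nat \<Rightarrow> (nat \<Rightarrow> nat \<Rightarrow> complex) \<Rightarrow> (nat \<Rightarrow> complex) \<Rightarrow> complex" where
  "quad_form K M c = (\<Sum>i<K. \<Sum>j<K. cnj (c i) * M i j * c j)"

definition psd_matrix :: "nat \<Rightarrow> (nat \<Rightarrow> nat \<Rightarrow> complex) \<Rightarrow> bool" where
  "psd_matrix K M \<longleftrightarrow> (\<forall>c. 0 \<le> quad_form K M c)"

lemma quad_form_supported:
  assumes "F \<subseteq> {..<K}" "\<And>i. i \<notin> F \<Longrightarrow> c i = 0"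
  shows "quad_form K M c = (\<Sum>i\<in>F. \<Sum>j\<in>F. cnj (c i) * M i j * c j)"
proof -
  have "(\<Sum>j<K. cnj (c i) * M i j * c j) = (\<Sum>j\<in>F. cnj (c i) * M i j * c j)" for i
    using assms by (intro sum.mono_neutral_right) auto
  then show ?thesis
    unfolding quad_form_def using assms by (simp, intro sum.mono_neutral_right) auto
qed

lemma psd_matrix_diag_nonneg:
  assumes "psd_matrix K M" "i < K"
  shows "0 \<le> M i i"
proof -
  have "quad_form K M (\<lambda>x. if x = i then 1 else 0) = M i i"
    using assms(2) by (subst quad_form_supported[of "{i}"]) auto
  with assms(1) show ?thesis unfolding psd_matrix_def by metis
qed

lemma quad_form_two_point:
  assumes "i < K" "j < K" "i \<noteq> j"
  shows "quad_form K M (\<lambda>x. if x = i then a else if x = j then b else 0)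
    = cnj a * M i i * a + cnj a * M i j * b + cnj b * M j i * a + cnj b * M j j * b"
  using assms by (subst quad_form_supported[of "{i, j}"]) auto

lemma psd_matrix_hermitian:
  assumes "psd_matrix K M" "i < K" "j < K"
  shows "M j i = cnj (M i j)"
proof (cases "i = j")
  case True
  with psd_matrix_diag_nonneg[OF assms(1,2)] show ?thesis
    by (simp add: less_eq_complex_def complex_eq_iff)
next
  case False
  have diag: "Im (M i i) = 0" "Im (M j j) = 0"
    using psd_matrix_diag_nonneg[OF assms(1,2)] psd_matrix_diag_nonneg[OF assms(1,3)]
    by (auto simp: less_eq_complex_def)
  have "0 \<le> quad_form K M (\<lambda>x. if x = i then 1 else if x = j then 1 else 0)"
    "0 \<le> quad_form K M (\<lambda>x. if x = i then 1 else if x = j then \<i> else 0)"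
    using assms(1) unfolding psd_matrix_def by blast+
  then have "Im (M i j + M j i) = 0" "Re (M i j - M j i) = 0"
    using diag by (simp_all add: quad_form_two_point[OF assms(2,3) False] less_eq_complex_def)
  then show ?thesis by (simp add: complex_eq_iff)
qed

lemma psd_matrix_zero_diag:
  assumes "psd_matrix K M" "i < K" "j < K" "M j j = 0"
  shows "M i j = 0"
proof (rule ccontr)
  assume "M i j \<noteq> 0"
  define z where "z = M i j"
  with \<open>M i j \<noteq> 0\<close> assms(4) have "i \<noteq> j" and z: "(cmod z)\<^sup>2 > 0" by auto
  define s where "s = (Re (M i i) + 1) / (2 * (cmod z)\<^sup>2)"
  have "0 \<le> quad_form K M (\<lambda>x. if x = i then 1 else if x = j then - complex_of_real s * cnj z else 0)"
    using assms(1) unfolding psd_matrix_def by blast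
  also have "\<dots> = M i i - 2 * complex_of_real (s * (cmod z)\<^sup>2)"
    using assms(4) psd_matrix_hermitian[OF assms(1-3)] complex_norm_square[of z, symmetric]
    by (simp add: quad_form_two_point[OF assms(2,3) \<open>i \<noteq> j\<close>] z_def[symmetric] algebra_simps)
  finally have "2 * (s * (cmod z)\<^sup>2) \<le> Re (M i i)" by (simp add: less_eq_complex_def)
  moreover have "s * (cmod z)\<^sup>2 = (Re (M i i) + 1) / 2" unfolding s_def using z by simp
  ultimately show False by simp
qed

lemma quad_form_Suc:
  "quad_form (Suc K) M c = quad_form K M c + (\<Sum>i<K. cnj (c i) * M i K) * c K
    + cnj (c K) * (\<Sum>j<K. M K j * c j) + cnj (c K) * M K K * c K"
  unfolding quad_form_def by (simp add: sum.distrib sum_distrib_left sum_distrib_right mult.assoc)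

lemma quad_form_cong: "(\<And>i. i < K \<Longrightarrow> c i = c' i) \<Longrightarrow> quad_form K M c = quad_form K M c'"
  unfolding quad_form_def by (intro sum.cong) auto

lemma psd_matrix_Suc_restrict:
  assumes "psd_matrix (Suc K) M"
  shows "psd_matrix K M"
  unfolding psd_matrix_def
proof
  fix c
  have "quad_form (Suc K) M (c(K := 0)) = quad_form K M (c(K := 0))"
    by (simp add: quad_form_Suc)
  also have "\<dots> = quad_form K M c"
    by (rule quad_form_cong) simp
  finally have "quad_form K M c = quad_form (Suc K) M (c(K := 0))" ..
  with assms show "0 \<le> quad_form K M c" unfolding psd_matrix_def by metis
qed

lemma psd_matrix_schur_complement:
  assumes "psd_matrix (Suc K) M"
  shows "psd_matrix K (\<lambda>i j. M i j - M i K * M K j / M K K)"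
proof (cases "M K K = 0")
  case True
  then show ?thesis using psd_matrix_Suc_restrict[OF assms] by simp
next
  case False
  define m where "m = M K K"
  have "cnj m = m"
    using psd_matrix_diag_nonneg[OF assms, of K] by (simp add: m_def less_eq_complex_def complex_eq_iff)
  show ?thesis unfolding psd_matrix_def
  proof
    fix c
    define s where "s = (\<Sum>j<K. M K j * c j)"
    define c' where "c' = c(K := - s / m)"
    have col: "(\<Sum>i<K. cnj (c i) * M i K) = cnj s"
      unfolding s_def using psd_matrix_hermitian[OF assms, of _ K] by (simp add: mult.commute)
    have "quad_form K (\<lambda>i j. M i j - M i K * M K j / m) c = quad_form K M c - cnj s * s / m"
      unfolding quad_form_def col[symmetric] unfolding s_def sum_product
      by (simp add: algebra_simps sum_subtractf sum_divide_distrib)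
    also have "\<dots> = quad_form K M c + cnj s * (- s / m) + cnj (- s / m) * s + cnj (- s / m) * m * (- s / m)"
      using False \<open>cnj m = m\<close> by (simp add: m_def[symmetric] field_simps)
    also have "\<dots> = quad_form (Suc K) M c'"
    proof -
      have "quad_form K M c' = quad_form K M c" by (rule quad_form_cong) (simp add: c'_def)
      then show ?thesis unfolding quad_form_Suc by (simp add: c'_def col s_def[symmetric] m_def)
    qed
    finally show "0 \<le> quad_form K (\<lambda>i j. M i j - M i K * M K j / M K K) c"
      using assms unfolding psd_matrix_def m_def by simp
  qed
qed

text \<open>One step of a Cholesky factorisation. If M K K = 0 then u vanishes, since division by zero
  yields zero, and so do the last row and column of M.\<close>

lemma psd_matrix_schur_decomposition:
  assumes M: "psd_matrix (Suc K) M" and "i < Suc K" "j < Suc K"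
  defines "u \<equiv> \<lambda>i. M i K / complex_of_real (sqrt (Re (M K K)))"
  shows "M i j = (if i < K \<and> j < K then M i j - M i K * M K j / M K K else 0) + u i * cnj (u j)"
proof -
  have MKK: "M K K = complex_of_real (Re (M K K))" "Re (M K K) \<ge> 0"
    using psd_matrix_diag_nonneg[OF M, of K] by (auto simp: less_eq_complex_def complex_eq_iff)
  define r where "r = complex_of_real (sqrt (Re (M K K)))"
  have "r * r = complex_of_real (Re (M K K))"
    using MKK(2) by (simp add: r_def flip: of_real_mult)
  then have rr: "r * r = M K K" by (rule trans[OF _ MKK(1)[symmetric]])
  have "cnj (M j K) = M K j" using psd_matrix_hermitian[OF M \<open>j < Suc K\<close>, of K] by simp
  then have "u i * cnj (u j) = M i K * M K j / (r * r)" by (simp add: u_def r_def)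
  also have "\<dots> = M i K * M K j / M K K" by (simp only: rr)
  finally have uu: "u i * cnj (u j) = M i K * M K j / M K K" .
  have "M i K * M K j / M K K = M i j" if "i = K \<or> j = K"
  proof (cases "M K K = 0")
    case True
    then have "M i K = 0" "M j K = 0"
      using psd_matrix_zero_diag[OF M] \<open>i < Suc K\<close> \<open>j < Suc K\<close> by auto
    with psd_matrix_hermitian[OF M \<open>j < Suc K\<close>, of K] that show ?thesis by auto
  qed (use that in auto)
  with uu \<open>i < Suc K\<close> \<open>j < Suc K\<close> show ?thesis by auto
qed

lemma psd_matrix_gram:
  "psd_matrix K M \<Longrightarrow> \<exists>(L::nat) \<omega>. \<forall>i<K. \<forall>j<K. M i j = (\<Sum>l<L. \<omega> l i * cnj (\<omega> l j))"
proof (induct K arbitrary: M)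
  case (Suc K M)
  have "\<exists>(L::nat) \<omega>. \<forall>i<K. \<forall>j<K. M i j - M i K * M K j / M K K = (\<Sum>l<L. \<omega> l i * cnj (\<omega> l j))"
    using Suc.hyps[OF psd_matrix_schur_complement[OF Suc.prems]] by simp
  then obtain L :: nat and \<omega> where
    \<omega>: "\<forall>i<K. \<forall>j<K. M i j - M i K * M K j / M K K = (\<Sum>l<L. \<omega> l i * cnj (\<omega> l j))"
    by blast
  define \<omega>' where "\<omega>' l i = (if l < L then if i < K then \<omega> l i else 0
    else M i K / complex_of_real (sqrt (Re (M K K))))" for l i
  have "M i j = (\<Sum>l<Suc L. \<omega>' l i * cnj (\<omega>' l j))" if "i < Suc K" "j < Suc K" for i j
    using psd_matrix_schur_decomposition[OF Suc.prems that] \<omega>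
    by (cases "i < K \<and> j < K") (auto simp: \<omega>'_def)
  then show ?case by blast
qed simp

section \<open>Positive operator matrices\<close>

lemma opmat_pos_iff:
  "opmat_pos n X \<longleftrightarrow> (\<forall>i<n. \<forall>j<n. X i j \<in> bop)
    \<and> (\<forall>\<xi>. 0 \<le> (\<Sum>i<n. \<Sum>j<n. cinner (\<xi> i) (X i j (\<xi> j))))"
proof -
  have "(\<exists>r\<ge>0. z = complex_of_real r) \<longleftrightarrow> 0 \<le> z" for z
    by (auto simp: less_eq_complex_def complex_eq_iff intro: exI[of _ "Re z"])
  then show ?thesis unfolding opmat_pos_def by presburger
qed

lemma opmat_pos_bop: "opmat_pos n X \<Longrightarrow> i < n \<Longrightarrow> j < n \<Longrightarrow> X i j \<in> bop"
  unfolding opmat_pos_def by blast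

lemma sum_regroup: "(\<Sum>i<n * m. f i) = (\<Sum>j<n. \<Sum>p<m. f (j * m + p))" for n m :: nat
proof -
  have "sum f {k..<k + l} = (\<Sum>p<l. f (k + p))" for k l
    by (induct l) (simp_all add: add.commute)
  then show ?thesis using sum.nat_group[of f m n] by simp
qed

lemma sum_swap_pairs:
  "(\<Sum>i\<in>A. \<Sum>j\<in>A. \<Sum>k\<in>B. \<Sum>l\<in>B. F i j k l) = (\<Sum>k\<in>B. \<Sum>l\<in>B. \<Sum>i\<in>A. \<Sum>j\<in>A. F i j k l)"
proof -
  have "(\<Sum>i\<in>A. \<Sum>j\<in>A. \<Sum>k\<in>B. \<Sum>l\<in>B. F i j k l) = (\<Sum>i\<in>A. \<Sum>k\<in>B. \<Sum>j\<in>A. \<Sum>l\<in>B. F i j k l)"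
    by (rule sum.cong[OF refl], rule sum.swap)
  also have "\<dots> = (\<Sum>k\<in>B. \<Sum>i\<in>A. \<Sum>j\<in>A. \<Sum>l\<in>B. F i j k l)"
    by (rule sum.swap)
  also have "\<dots> = (\<Sum>k\<in>B. \<Sum>i\<in>A. \<Sum>l\<in>B. \<Sum>j\<in>A. F i j k l)"
    by (rule sum.cong[OF refl], rule sum.cong[OF refl], rule sum.swap)
  also have "\<dots> = (\<Sum>k\<in>B. \<Sum>l\<in>B. \<Sum>i\<in>A. \<Sum>j\<in>A. F i j k l)"
    by (rule sum.cong[OF refl], rule sum.swap)
  finally show ?thesis .
qed

lemma mult_add_less_mult: "a < n \<Longrightarrow> r < d \<Longrightarrow> a * d + r < n * (d::nat)"
proof -
  assume "a < n" "r < d"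
  then have "a * d + r < Suc a * d" by simp
  also have "\<dots> \<le> n * d" using \<open>a < n\<close> by (intro mult_right_mono) auto
  finally show ?thesis .
qed

lemma opmat_pos_rank_one: "opmat_pos n (\<lambda>r s. rank_one (w r) (w s))"
  unfolding opmat_pos_iff
proof (intro conjI allI impI rank_one_bop)
  fix \<xi> :: "nat \<Rightarrow> 'a"
  define z where "z = (\<Sum>s<n. cinner (w s) (\<xi> s))"
  have "(\<Sum>r<n. \<Sum>s<n. cinner (\<xi> r) (rank_one (w r) (w s) (\<xi> s)))
      = (\<Sum>r<n. \<Sum>s<n. cnj (cinner (w r) (\<xi> r)) * cinner (w s) (\<xi> s))"
    unfolding rank_one_def
    by (intro sum.cong refl) (simp add: cinner_scaleC_right cinner_conj[of "\<xi> _"] mult.commute)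
  also have "\<dots> = cnj z * z"
    by (simp add: z_def sum_product)
  finally show "0 \<le> (\<Sum>r<n. \<Sum>s<n. cinner (\<xi> r) (rank_one (w r) (w s) (\<xi> s)))"
    by (simp add: cnj_mult_self less_eq_complex_def flip: of_real_power)
qed

text \<open>The block matrix J_n \<otimes> X, where J_n is the n \<times> n matrix of ones; the block index
  a = j * m + p stands for the pair (j, p).\<close>

lemma opmat_pos_repeat:
  assumes X: "opmat_pos m X"
  shows "opmat_pos (n * m) (\<lambda>a c. X (a mod m) (c mod m))"
  unfolding opmat_pos_iff
proof (intro conjI allI impI)
  fix a c assume "a < n * m" "c < n * m"
  then have "m > 0" by (cases m) auto
  then show "X (a mod m) (c mod m) \<in> bop" by (intro opmat_pos_bop[OF X]) auto
next
  fix \<xi> :: "nat \<Rightarrow> 'a"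
  define \<xi>' where "\<xi>' p = (\<Sum>j<n. \<xi> (j * m + p))" for p
  have "(\<Sum>a<n * m. \<Sum>c<n * m. cinner (\<xi> a) (X (a mod m) (c mod m) (\<xi> c)))
      = (\<Sum>j<n. \<Sum>p<m. \<Sum>k<n. \<Sum>q<m. cinner (\<xi> (j * m + p)) (X p q (\<xi> (k * m + q))))"
    by (simp add: sum_regroup)
  also have "\<dots> = (\<Sum>j<n. \<Sum>k<n. \<Sum>p<m. \<Sum>q<m. cinner (\<xi> (j * m + p)) (X p q (\<xi> (k * m + q))))"
    by (rule sum.cong[OF refl], rule sum.swap)
  also have "\<dots> = (\<Sum>p<m. \<Sum>q<m. \<Sum>j<n. \<Sum>k<n. cinner (\<xi> (j * m + p)) (X p q (\<xi> (k * m + q))))"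
    by (rule sum_swap_pairs)
  also have "\<dots> = (\<Sum>p<m. \<Sum>q<m. cinner (\<xi>' p) (X p q (\<xi>' q)))"
  proof (intro sum.cong refl)
    fix p q assume "p \<in> {..<m}" "q \<in> {..<m}"
    then have "clin (X p q)" by (simp add: bop_clin opmat_pos_bop[OF X])
    then show "(\<Sum>j<n. \<Sum>k<n. cinner (\<xi> (j * m + p)) (X p q (\<xi> (k * m + q))))
        = cinner (\<xi>' p) (X p q (\<xi>' q))"
      by (simp add: \<xi>'_def clin_sum cinner_sum_left cinner_sum_right) (rule sum.swap)
  qed
  finally show "0 \<le> (\<Sum>a<n * m. \<Sum>c<n * m. cinner (\<xi> a) (X (a mod m) (c mod m) (\<xi> c)))"
    using X unfolding opmat_pos_iff by simp
qed

text \<open>The index a * d + r stands for the pair (a, r).\<close>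

lemma psd_matrix_opmat_coefficients:
  assumes Y: "opmat_pos N Y"
  shows "psd_matrix (N * d) (\<lambda>i j. cinner (e (i mod d)) (Y (i div d) (j div d) (e (j mod d))))"
  unfolding psd_matrix_def quad_form_def
proof
  fix x :: "nat \<Rightarrow> complex"
  define z where "z a = (\<Sum>r<d. scaleC (x (a * d + r)) (e r))" for a
  have "(\<Sum>i<N * d. \<Sum>j<N * d. cnj (x i) * cinner (e (i mod d)) (Y (i div d) (j div d) (e (j mod d))) * x j)
      = (\<Sum>a<N. \<Sum>r<d. \<Sum>c<N. \<Sum>s<d. cnj (x (a * d + r)) * cinner (e r) (Y a c (e s)) * x (c * d + s))"
    by (simp add: sum_regroup)
  also have "\<dots> = (\<Sum>a<N. \<Sum>c<N. \<Sum>r<d. \<Sum>s<d. cnj (x (a * d + r)) * cinner (e r) (Y a c (e s)) * x (c * d + s))"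
    by (rule sum.cong[OF refl], rule sum.swap)
  also have "\<dots> = (\<Sum>a<N. \<Sum>c<N. cinner (z a) (Y a c (z c)))"
  proof (intro sum.cong refl)
    fix a c assume "a \<in> {..<N}" "c \<in> {..<N}"
    then have Yac: "clin (Y a c)" by (simp add: bop_clin opmat_pos_bop[OF Y])
    have "cinner (z a) (Y a c (z c)) = (\<Sum>r<d. cnj (x (a * d + r)) * cinner (e r) (Y a c (z c)))"
      by (simp add: z_def cinner_sum_left cinner_scaleC_left)
    also have "\<dots> = (\<Sum>r<d. \<Sum>s<d. cnj (x (a * d + r)) * cinner (e r) (Y a c (e s)) * x (c * d + s))"
      by (simp add: z_def clin_sum[OF Yac] clinD[OF Yac] cinner_sum_right cinner_scaleC_right
          sum_distrib_left mult_ac)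
    finally show "(\<Sum>r<d. \<Sum>s<d. cnj (x (a * d + r)) * cinner (e r) (Y a c (e s)) * x (c * d + s))
        = cinner (z a) (Y a c (z c))" ..
  qed
  finally show "0 \<le> (\<Sum>i<N * d. \<Sum>j<N * d. cnj (x i) * cinner (e (i mod d)) (Y (i div d) (j div d) (e (j mod d))) * x j)"
    using Y unfolding opmat_pos_iff by simp
qed

lemma opmat_pos_rank_one_decomposition:
  fixes Y :: "nat \<Rightarrow> nat \<Rightarrow> 'a::chilbert \<Rightarrow> 'a" and e :: "nat \<Rightarrow> 'a"
  assumes e: "orthonormal_basis d e" and Y: "opmat_pos N Y"
  shows "\<exists>(L::nat) w. \<forall>a<N. \<forall>c<N. Y a c = (\<lambda>v. \<Sum>l<L. rank_one (w l a) (w l c) v)"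
proof -
  obtain L :: nat and \<omega> where \<omega>: "\<forall>i<N * d. \<forall>j<N * d.
      cinner (e (i mod d)) (Y (i div d) (j div d) (e (j mod d))) = (\<Sum>l<L. \<omega> l i * cnj (\<omega> l j))"
    using psd_matrix_gram[OF psd_matrix_opmat_coefficients[OF Y]] by blast
  define w where "w l a = (\<Sum>r<d. scaleC (\<omega> l (a * d + r)) (e r))" for l a
  have "Y a c = (\<lambda>v. \<Sum>l<L. rank_one (w l a) (w l c) v)" if "a < N" "c < N" for a c
  proof (rule clin_eq_on_orthonormal_basis[OF e])
    show "clin (Y a c)" using opmat_pos_bop[OF Y that] by (rule bop_clin)
    show "clin (\<lambda>v. \<Sum>l<L. rank_one (w l a) (w l c) v)"
      by (intro bop_clin bop_sum rank_one_bop) auto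
    fix r s assume "r < d" "s < d"
    have "(a * d + r) div d = a" "(a * d + r) mod d = r" "(c * d + s) div d = c" "(c * d + s) mod d = s"
      using \<open>r < d\<close> \<open>s < d\<close> by auto
    moreover have "cinner (e ((a * d + r) mod d)) (Y ((a * d + r) div d) ((c * d + s) div d) (e ((c * d + s) mod d)))
        = (\<Sum>l<L. \<omega> l (a * d + r) * cnj (\<omega> l (c * d + s)))"
      using \<omega> mult_add_less_mult[OF that(1) \<open>r < d\<close>] mult_add_less_mult[OF that(2) \<open>s < d\<close>] by blast
    ultimately have "cinner (e r) (Y a c (e s)) = (\<Sum>l<L. \<omega> l (a * d + r) * cnj (\<omega> l (c * d + s)))"
      by simp
    also have "\<dots> = cinner (e r) (\<Sum>l<L. rank_one (w l a) (w l c) (e s))"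
    proof -
      have "orthonormal d e" using e by (simp add: orthonormal_basis_def)
      then have "cinner (e r) (w l a) = \<omega> l (a * d + r)" "cinner (w l c) (e s) = cnj (\<omega> l (c * d + s))" for l
        unfolding w_def
        by (rule orthonormal_cinner_sum_right[OF _ \<open>r < d\<close>], rule orthonormal_cinner_sum_left[OF _ \<open>s < d\<close>])
      then show ?thesis
        by (simp add: rank_one_def cinner_sum_right cinner_scaleC_right mult.commute)
    qed
    finally show "cinner (e r) (Y a c (e s)) = cinner (e r) (\<Sum>l<L. rank_one (w l a) (w l c) (e s))" .
  qed
  then show ?thesis by blast
qed

lemma rank_one_expansion:
  assumes "orthonormal_basis d e"
  shows "rank_one u w = (\<lambda>v. \<Sum>r<d. \<Sum>s<d.
    scaleC (cinner (e r) u * cnj (cinner (e s) w)) (rank_one (e r) (e s) v))"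
proof
  fix v
  have expand: "x = (\<Sum>r<d. scaleC (cinner (e r) x) (e r))" for x
    using assms unfolding orthonormal_basis_def by blast
  have "rank_one u w v = scaleC (\<Sum>s<d. cnj (cinner (e s) w) * cinner (e s) v) (\<Sum>r<d. scaleC (cinner (e r) u) (e r))"
    unfolding rank_one_def by (subst (1 2) expand) (simp add: cinner_sum_left cinner_scaleC_left)
  also have "\<dots> = (\<Sum>r<d. \<Sum>s<d. scaleC (cinner (e r) u * cnj (cinner (e s) w)) (rank_one (e r) (e s) v))"
    by (simp add: rank_one_def scaleC_sum_left scaleC_sum_right scaleC_scaleC sum_distrib_left mult_ac)
  finally show "rank_one u w v = (\<Sum>r<d. \<Sum>s<d.
      scaleC (cinner (e r) u * cnj (cinner (e s) w)) (rank_one (e r) (e s) v))" .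
qed

lemma bop_linear_double_lincomb:
  assumes "bop_linear \<phi>" "finite I" "finite J" "\<And>i j. i \<in> I \<Longrightarrow> j \<in> J \<Longrightarrow> A i j \<in> bop"
  shows "\<phi> (\<lambda>v. \<Sum>i\<in>I. \<Sum>j\<in>J. scaleC (c i j) (A i j v))
    = (\<lambda>v. \<Sum>i\<in>I. \<Sum>j\<in>J. scaleC (c i j) (\<phi> (A i j) v))"
proof -
  have "\<phi> (\<lambda>v. \<Sum>j\<in>J. scaleC (c i j) (A i j v)) = (\<lambda>v. \<Sum>j\<in>J. scaleC (c i j) (\<phi> (A i j) v))"
    if "i \<in> I" for i
    using bop_linear_sum[OF assms(1,3), of "\<lambda>j v. scaleC (c i j) (A i j v)"] assms(4)[OF that]
    by (simp add: bop_scaleC bop_linear_scaleC[OF assms(1)])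
  moreover have "(\<lambda>v. \<Sum>j\<in>J. scaleC (c i j) (A i j v)) \<in> bop" if "i \<in> I" for i
    using assms(3,4) that by (intro bop_sum bop_scaleC) auto
  ultimately show ?thesis
    using bop_linear_sum[OF assms(1,2), of "\<lambda>i v. \<Sum>j\<in>J. scaleC (c i j) (A i j v)"] by simp
qed

section \<open>Completely positive kernels\<close>

lemma cp_kernel_bop_linear: "cp_kernel S K \<Longrightarrow> f \<in> S \<Longrightarrow> g \<in> S \<Longrightarrow> bop_linear (K f g)"
  unfolding cp_kernel_def by blast

definition kernel_map ::
    "nat \<Rightarrow> ('s \<Rightarrow> 's \<Rightarrow> ('a::chilbert \<Rightarrow> 'a) \<Rightarrow> ('a \<Rightarrow> 'a)) \<Rightarrow> (nat \<Rightarrow> 's) \<Rightarrow> (nat \<Rightarrow> 'a \<Rightarrow> 'a)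
      \<Rightarrow> ('a \<Rightarrow> 'a) \<Rightarrow> ('a \<Rightarrow> 'a)" where
  "kernel_map n K fs bs = (\<lambda>x v. \<Sum>j<n. \<Sum>k<n. cadj (bs j) (K (fs j) (fs k) x (bs k v)))"

lemma cp_kernel_iff_kernel_map:
  "cp_kernel S K \<longleftrightarrow> (\<forall>f\<in>S. \<forall>g\<in>S. bop_linear (K f g))
    \<and> (\<forall>n fs bs. (\<forall>j<n. fs j \<in> S \<and> bs j \<in> bop) \<longrightarrow> cp_map (kernel_map n K fs bs))"
  unfolding cp_kernel_def kernel_map_def ..

lemma cinner_kernel_map:
  "(\<And>j. j < n \<Longrightarrow> bs j \<in> bop) \<Longrightarrow> cinner u (kernel_map n K fs bs x v)
    = (\<Sum>j<n. \<Sum>k<n. cinner (bs j u) (K (fs j) (fs k) x (bs k v)))"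
  by (simp add: kernel_map_def cinner_sum_right cadj_cinner)

lemma bop_linear_kernel_map:
  assumes "\<And>j k. j < n \<Longrightarrow> k < n \<Longrightarrow> bop_linear (K (fs j) (fs k))" "\<And>j. j < n \<Longrightarrow> bs j \<in> bop"
  shows "bop_linear (kernel_map n K fs bs)"
proof -
  have "bop_linear (\<lambda>x v. cadj (bs j) (K (fs j) (fs k) x (bs k v)))" if "j < n" "k < n" for j k
    using assms that by (simp add: bop_linear_sandwich cadj_bop)
  then show ?thesis
    unfolding kernel_map_def by (intro bop_linear_sum_maps) auto
qed

lemma cp_kernel_nonneg:
  fixes K :: "'s \<Rightarrow> 's \<Rightarrow> ('a::chilbert \<Rightarrow> 'a) \<Rightarrow> ('a \<Rightarrow> 'a)" and N M :: nat
  assumes K: "cp_kernel S K" and gb: "\<And>a. a < N \<Longrightarrow> g a \<in> S \<and> b a \<in> bop"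
    and X: "opmat_pos M X"
  shows "0 \<le> (\<Sum>p<M. \<Sum>q<M. \<Sum>a<N. \<Sum>c<N. cinner (b a (\<eta> p)) (K (g a) (g c) (X p q) (b c (\<eta> q))))"
proof -
  have "cp_map (kernel_map N K g b)"
    using K gb unfolding cp_kernel_iff_kernel_map by blast
  with X have "opmat_pos M (\<lambda>p q. kernel_map N K g b (X p q))" unfolding cp_map_def by blast
  then show ?thesis
    using gb by (simp add: opmat_pos_iff cinner_kernel_map)
qed

text \<open>Testing the kernel with b a = rank_one (\<zeta> a) (e a) and the vectors e p keeps exactly
  the terms with a = p and c = q.\<close>

lemma cp_kernel_block_nonneg_orthonormal:
  fixes K :: "'s \<Rightarrow> 's \<Rightarrow> ('a::chilbert \<Rightarrow> 'a) \<Rightarrow> ('a \<Rightarrow> 'a)" and e :: "nat \<Rightarrow> 'a" and N :: nat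
  assumes K: "cp_kernel S K" and g: "\<And>a. a < N \<Longrightarrow> g a \<in> S"
    and Y: "opmat_pos N Y" and e: "orthonormal N e"
  shows "0 \<le> (\<Sum>a<N. \<Sum>c<N. cinner (\<zeta> a) (K (g a) (g c) (Y a c) (\<zeta> c)))"
proof -
  define b where "b a = rank_one (\<zeta> a) (e a)" for a
  have b_e: "b a (e p) = (if a = p then \<zeta> a else 0)" if "a < N" "p < N" for a p
    using e that by (simp add: b_def rank_one_def orthonormal_def scaleC_one)
  have KY: "clin (K (g a) (g c) (Y p q))" if "a < N" "c < N" "p < N" "q < N" for a c p q
    using cp_kernel_bop_linear[OF K g g] opmat_pos_bop[OF Y] that by (simp add: bop_clin bop_linear_in_bop)
  have "(\<Sum>a<N. \<Sum>c<N. cinner (b a (e p)) (K (g a) (g c) (Y p q) (b c (e q))))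
      = cinner (\<zeta> p) (K (g p) (g q) (Y p q) (\<zeta> q))" if "p < N" "q < N" for p q
  proof -
    have "(\<Sum>c<N. cinner (b a (e p)) (K (g a) (g c) (Y p q) (b c (e q))))
        = (if a = p then cinner (\<zeta> p) (K (g p) (g q) (Y p q) (\<zeta> q)) else 0)" if "a < N" for a
    proof (cases "a = p")
      case True
      have "cinner (b a (e p)) (K (g a) (g c) (Y p q) (b c (e q)))
          = (if c = q then cinner (\<zeta> p) (K (g p) (g q) (Y p q) (\<zeta> q)) else 0)" if "c < N" for c
        using True b_e[OF \<open>a < N\<close> \<open>p < N\<close>] b_e[OF that \<open>q < N\<close>]
          clin_zero[OF KY[OF \<open>a < N\<close> that \<open>p < N\<close> \<open>q < N\<close>]] by auto
      with True \<open>q < N\<close> show ?thesis by (simp add: sum.delta')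
    qed (simp add: b_e that \<open>p < N\<close>)
    with \<open>p < N\<close> show ?thesis by (simp add: sum.delta')
  qed
  moreover have "0 \<le> (\<Sum>p<N. \<Sum>q<N. \<Sum>a<N. \<Sum>c<N. cinner (b a (e p)) (K (g a) (g c) (Y p q) (b c (e q))))"
    using g by (intro cp_kernel_nonneg[OF K _ Y]) (simp add: b_def rank_one_bop)
  ultimately show ?thesis by simp
qed

lemma cp_kernel_block_nonneg_rank_one:
  fixes K :: "'s \<Rightarrow> 's \<Rightarrow> ('a::chilbert \<Rightarrow> 'a) \<Rightarrow> ('a \<Rightarrow> 'a)" and e :: "nat \<Rightarrow> 'a" and N :: nat
  assumes K: "cp_kernel S K" and g: "\<And>a. a < N \<Longrightarrow> g a \<in> S" and e: "orthonormal_basis d e"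
  shows "0 \<le> (\<Sum>a<N. \<Sum>c<N. cinner (\<zeta> a) (K (g a) (g c) (rank_one (w a) (w c)) (\<zeta> c)))"
proof -
  define b where "b a = rank_one (\<zeta> a) (w a)" for a
  define \<alpha> where "\<alpha> a r = cinner (e r) (w a)" for a r
  define T where "T a c r s = \<alpha> a r * cnj (\<alpha> c s) * cinner (\<zeta> a) (K (g a) (g c) (rank_one (e r) (e s)) (\<zeta> c))"
    for a c r s
  have "cinner (b a (e r)) (K (g a) (g c) (rank_one (e r) (e s)) (b c (e s))) = T a c r s"
    if "a < N" "c < N" for a c r s
  proof -
    have "clin (K (g a) (g c) (rank_one (e r) (e s)))"
      using cp_kernel_bop_linear[OF K g g] that by (simp add: bop_clin bop_linear_in_bop rank_one_bop)
    then show ?thesis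
      by (simp add: T_def \<alpha>_def b_def rank_one_def clinD cinner_scaleC_left cinner_scaleC_right
          cinner_conj[of "w _" "e _"] mult_ac)
  qed
  moreover have "0 \<le> (\<Sum>r<d. \<Sum>s<d. \<Sum>a<N. \<Sum>c<N.
      cinner (b a (e r)) (K (g a) (g c) (rank_one (e r) (e s)) (b c (e s))))"
    using g by (intro cp_kernel_nonneg[OF K _ opmat_pos_rank_one]) (simp add: b_def rank_one_bop)
  ultimately have "0 \<le> (\<Sum>r<d. \<Sum>s<d. \<Sum>a<N. \<Sum>c<N. T a c r s)"
    by simp
  also have "\<dots> = (\<Sum>a<N. \<Sum>c<N. \<Sum>r<d. \<Sum>s<d. T a c r s)"
    by (rule sum_swap_pairs)
  also have "\<dots> = (\<Sum>a<N. \<Sum>c<N. cinner (\<zeta> a) (K (g a) (g c) (rank_one (w a) (w c)) (\<zeta> c)))"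
  proof (intro sum.cong refl)
    fix a c assume "a \<in> {..<N}" "c \<in> {..<N}"
    then have "bop_linear (K (g a) (g c))" using cp_kernel_bop_linear[OF K g g] by simp
    then have "K (g a) (g c) (rank_one (w a) (w c)) = (\<lambda>v. \<Sum>r<d. \<Sum>s<d.
        scaleC (\<alpha> a r * cnj (\<alpha> c s)) (K (g a) (g c) (rank_one (e r) (e s)) v))"
      unfolding rank_one_expansion[OF e, of "w a" "w c"] \<alpha>_def
      by (rule bop_linear_double_lincomb) (simp_all add: rank_one_bop)
    then show "(\<Sum>r<d. \<Sum>s<d. T a c r s) = cinner (\<zeta> a) (K (g a) (g c) (rank_one (w a) (w c)) (\<zeta> c))"
      by (simp add: cinner_sum_right cinner_scaleC_right T_def)
  qed
  finally show ?thesis .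
qed

lemma cp_kernel_block_nonneg_basis:
  fixes K :: "'s \<Rightarrow> 's \<Rightarrow> ('a::chilbert \<Rightarrow> 'a) \<Rightarrow> ('a \<Rightarrow> 'a)" and e :: "nat \<Rightarrow> 'a" and N :: nat
  assumes K: "cp_kernel S K" and g: "\<And>a. a < N \<Longrightarrow> g a \<in> S"
    and Y: "opmat_pos N Y" and e: "orthonormal_basis d e"
  shows "0 \<le> (\<Sum>a<N. \<Sum>c<N. cinner (\<zeta> a) (K (g a) (g c) (Y a c) (\<zeta> c)))"
proof -
  obtain L :: nat and w where w: "\<And>a c. a < N \<Longrightarrow> c < N \<Longrightarrow> Y a c = (\<lambda>v. \<Sum>l<L. rank_one (w l a) (w l c) v)"
    using opmat_pos_rank_one_decomposition[OF e Y] by blast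
  have "(\<Sum>a<N. \<Sum>c<N. cinner (\<zeta> a) (K (g a) (g c) (Y a c) (\<zeta> c)))
      = (\<Sum>a<N. \<Sum>c<N. \<Sum>l<L. cinner (\<zeta> a) (K (g a) (g c) (rank_one (w l a) (w l c)) (\<zeta> c)))"
  proof (intro sum.cong refl)
    fix a c assume "a \<in> {..<N}" "c \<in> {..<N}"
    then have lin: "bop_linear (K (g a) (g c))" and Yac: "Y a c = (\<lambda>v. \<Sum>l<L. rank_one (w l a) (w l c) v)"
      using cp_kernel_bop_linear[OF K g g] w by auto
    have "K (g a) (g c) (Y a c) = (\<lambda>v. \<Sum>l<L. K (g a) (g c) (rank_one (w l a) (w l c)) v)"
      unfolding Yac by (rule bop_linear_sum[OF lin]) (simp_all add: rank_one_bop)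
    then show "cinner (\<zeta> a) (K (g a) (g c) (Y a c) (\<zeta> c))
        = (\<Sum>l<L. cinner (\<zeta> a) (K (g a) (g c) (rank_one (w l a) (w l c)) (\<zeta> c)))"
      by (simp add: cinner_sum_right)
  qed
  also have "\<dots> = (\<Sum>l<L. \<Sum>a<N. \<Sum>c<N. cinner (\<zeta> a) (K (g a) (g c) (rank_one (w l a) (w l c)) (\<zeta> c)))"
    by (simp only: sum.swap[of _ "{..<L}"])
  finally show ?thesis
    using cp_kernel_block_nonneg_rank_one[OF K g e] by (simp add: sum_nonneg)
qed

lemma cp_kernel_opmat_pos:
  fixes K :: "'s \<Rightarrow> 's \<Rightarrow> ('a::chilbert \<Rightarrow> 'a) \<Rightarrow> ('a \<Rightarrow> 'a)" and N :: nat
  assumes K: "cp_kernel S K" and g: "\<And>a. a < N \<Longrightarrow> g a \<in> S" and Y: "opmat_pos N Y"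
  shows "opmat_pos N (\<lambda>a c. K (g a) (g c) (Y a c))"
  unfolding opmat_pos_iff
proof (intro conjI allI impI)
  fix a c assume "a < N" "c < N"
  then show "K (g a) (g c) (Y a c) \<in> bop"
    by (intro bop_linear_in_bop[OF cp_kernel_bop_linear[OF K g g] opmat_pos_bop[OF Y]])
next
  fix \<zeta> :: "nat \<Rightarrow> 'a"
  from orthonormal_or_basis[of N]
  show "0 \<le> (\<Sum>a<N. \<Sum>c<N. cinner (\<zeta> a) (K (g a) (g c) (Y a c) (\<zeta> c)))"
  proof (elim disjE exE)
    fix e :: "nat \<Rightarrow> 'a" assume "orthonormal N e"
    with g show ?thesis by (rule cp_kernel_block_nonneg_orthonormal[OF K _ Y])
  next
    fix d and e :: "nat \<Rightarrow> 'a" assume "orthonormal_basis d e"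
    with g show ?thesis by (rule cp_kernel_block_nonneg_basis[OF K _ Y])
  qed
qed

lemma cp_kernelI:
  fixes K :: "'s \<Rightarrow> 's \<Rightarrow> ('a::chilbert \<Rightarrow> 'a) \<Rightarrow> ('a \<Rightarrow> 'a)"
  assumes lin: "\<And>f g. f \<in> S \<Longrightarrow> g \<in> S \<Longrightarrow> bop_linear (K f g)"
    and pos: "\<And>N g Y. (\<And>a. a < N \<Longrightarrow> g a \<in> S) \<Longrightarrow> opmat_pos N Y
      \<Longrightarrow> opmat_pos N (\<lambda>a c. K (g a) (g c) (Y a c))"
  shows "cp_kernel S K"
  unfolding cp_kernel_iff_kernel_map
proof (intro conjI ballI allI impI lin)
  fix n :: nat and fs :: "nat \<Rightarrow> 's" and bs :: "nat \<Rightarrow> 'a \<Rightarrow> 'a"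
  assume fs_bs: "\<forall>j<n. fs j \<in> S \<and> bs j \<in> bop"
  have "bop_linear (kernel_map n K fs bs)"
    using fs_bs by (intro bop_linear_kernel_map lin) auto
  moreover have "opmat_pos m (\<lambda>p q. kernel_map n K fs bs (X p q))" if X: "opmat_pos m X" for m X
    unfolding opmat_pos_iff
  proof (intro conjI allI impI)
    fix p q assume "p < m" "q < m"
    with \<open>bop_linear (kernel_map n K fs bs)\<close> show "kernel_map n K fs bs (X p q) \<in> bop"
      by (simp add: bop_linear_in_bop opmat_pos_bop[OF X])
  next
    fix \<eta> :: "nat \<Rightarrow> 'a"
    define T where "T j p k q = cinner (bs j (\<eta> p)) (K (fs j) (fs k) (X p q) (bs k (\<eta> q)))" for j p k q
    have "opmat_pos (n * m) (\<lambda>a c. K (fs (a div m)) (fs (c div m)) (X (a mod m) (c mod m)))"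
      using fs_bs by (intro pos opmat_pos_repeat X) (simp add: less_mult_imp_div_less)
    then have "0 \<le> (\<Sum>a<n * m. \<Sum>c<n * m. T (a div m) (a mod m) (c div m) (c mod m))"
      by (simp add: opmat_pos_iff T_def)
    also have "\<dots> = (\<Sum>j<n. \<Sum>p<m. \<Sum>k<n. \<Sum>q<m. T j p k q)"
      by (simp add: sum_regroup)
    also have "\<dots> = (\<Sum>j<n. \<Sum>k<n. \<Sum>p<m. \<Sum>q<m. T j p k q)"
      by (rule sum.cong[OF refl], rule sum.swap)
    also have "\<dots> = (\<Sum>p<m. \<Sum>q<m. \<Sum>j<n. \<Sum>k<n. T j p k q)"
      by (rule sum_swap_pairs)
    also have "\<dots> = (\<Sum>p<m. \<Sum>q<m. cinner (\<eta> p) (kernel_map n K fs bs (X p q) (\<eta> q)))"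
      using fs_bs by (simp add: T_def cinner_kernel_map)
    finally show "0 \<le> (\<Sum>p<m. \<Sum>q<m. cinner (\<eta> p) (kernel_map n K fs bs (X p q) (\<eta> q)))" .
  qed
  ultimately show "cp_map (kernel_map n K fs bs)" unfolding cp_map_def by blast
qed

lemma cp_kernel_comp:
  fixes Q P :: "'s \<Rightarrow> 's \<Rightarrow> ('a::chilbert \<Rightarrow> 'a) \<Rightarrow> ('a \<Rightarrow> 'a)"
  assumes Q: "cp_kernel S Q" and P: "cp_kernel S P"
  shows "cp_kernel S (\<lambda>f g. Q f g \<circ> P f g)"
proof (rule cp_kernelI)
  show "bop_linear (Q f g \<circ> P f g)" if "f \<in> S" "g \<in> S" for f g
    using that by (intro bop_linear_comp cp_kernel_bop_linear[OF Q] cp_kernel_bop_linear[OF P])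
  show "opmat_pos N (\<lambda>a c. (Q (g a) (g c) \<circ> P (g a) (g c)) (Y a c))"
    if "\<And>a. a < N \<Longrightarrow> g a \<in> S" "opmat_pos N Y" for N g Y
    using cp_kernel_opmat_pos[OF Q that(1) cp_kernel_opmat_pos[OF P that]] by simp
qed

lemma cp_kernel_image:
  assumes "cp_kernel (h ` S) K"
  shows "cp_kernel S (\<lambda>f g. K (h f) (h g))"
  using assms unfolding cp_kernel_def by (auto dest: spec[of _ "h \<circ> _"])

theorem lemma10:
  fixes S0 :: "(real \<Rightarrow> 'k::chilbert) set"
    and r s t :: real
    and Q P :: "(real \<Rightarrow> 'k) \<Rightarrow> (real \<Rightarrow> 'k) \<Rightarrow> ('h::chilbert \<Rightarrow> 'h) \<Rightarrow> ('h \<Rightarrow> 'h)"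
  assumes "totalizing S0"
    and "r < s" and "s < t"
    and "cp_kernel (chi {r..s} ` S0) Q"
    and "cp_kernel (chi {s..t} ` S0) P"
  shows "cp_kernel S0 (\<lambda>f g. Q (chi {r..s} f) (chi {r..s} g) \<circ> P (chi {s..t} f) (chi {s..t} g))"
  using cp_kernel_comp[OF cp_kernel_image[OF assms(4)] cp_kernel_image[OF assms(5)]] .

end
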